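(* Let $\mathcal F_{n,s,d}$ denote the class of $s$-sparse polynomials $f:\{0,1\}^n\to\mathbb{R}$ of degree at most $d$ all of whose non-zero M\"obius coefficients lie in $[s]=\{1,2,\dots,s\}$. Any deterministic algorithm that recovers every $f\in\mathcal F_{n,s,d}$ from evaluation queries (queries $\mathbf x\in\{0,1\}^n$ answered by $f(\mathbf x)$) must use at least $$\Omega\!\left(\frac{sd\log(n/d)}{\log s}\right)$$ queries in the worst case.
   Context: Every $f:\{0,1\}^n\to\mathbb{R}$ has a unique expansion $f(\mathbf x)=\sum_{\mathbf k\in\{0,1\}^n,\ \mathbf k\le\mathbf x}F(\mathbf k)$ (real addition, $\le$ componentwise); the $F(\mathbf k)$ are its M\"obius coefficients. $f$ is $s$-sparse if at most $s$ of its M\"obius coefficients are non-zero, and has degree at most $d$ if every $\mathbf k$ with $F(\mathbf k)\ne0$ has Hamming weight at most $d$. *)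

theory Defs
  imports Complex_Main
begin

text \<open>Points of the cube {0,1}^n are represented as subsets x of {..<n}
  (x = set of coordinates equal to 1); the componentwise order is inclusion.
  A function on the cube is a map nat set => real, taken to be 0 off the cube.\<close>

definition poly_of :: "nat \<Rightarrow> (nat set \<Rightarrow> real) \<Rightarrow> (nat set \<Rightarrow> real)" where
  "poly_of n F = (\<lambda>x. if x \<subseteq> {..<n} then (\<Sum>K\<in>Pow x. F K) else 0)"

definition good_coeffs :: "nat \<Rightarrow> nat \<Rightarrow> nat \<Rightarrow> (nat set \<Rightarrow> real) \<Rightarrow> bool" where
  "good_coeffs n s d F \<longleftrightarrow>
     (\<forall>K. F K \<noteq> 0 \<longrightarrow> K \<subseteq> {..<n} \<and> card K \<le> d \<and> F K \<in> real ` {1..s})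
     \<and> card {K. F K \<noteq> 0} \<le> s"

definition sparse_class :: "nat \<Rightarrow> nat \<Rightarrow> nat \<Rightarrow> (nat set \<Rightarrow> real) set" where
  "sparse_class n s d = {poly_of n F | F. good_coeffs n s d F}"

text \<open>A deterministic adaptive query algorithm: given the list of answers so far,
  it chooses the next query point. The transcript after q queries.\<close>
fun transcript :: "(real list \<Rightarrow> nat set) \<Rightarrow> (nat set \<Rightarrow> real) \<Rightarrow> nat \<Rightarrow> real list" where
  "transcript Q f 0 = []"
| "transcript Q f (Suc q) = (let h = transcript Q f q in h @ [f (Q h)])"

text \<open>The algorithm recovers every member of C with q queries iff distinct members
  produce distinct transcripts (the output is a function of the transcript).\<close>
definition recovers :: "(real list \<Rightarrow> nat set) \<Rightarrow> nat \<Rightarrow> (nat set \<Rightarrow> real) set \<Rightarrow> bool" where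
  "recovers Q q C \<longleftrightarrow> inj_on (\<lambda>f. transcript Q f q) C"

end

theory Submission
  imports Defs "HOL-Library.FuncSet"
begin

text \<open>An information-theoretic counting argument. Choosing any s of the
  M = \<Sum>i\<le>d. n choose i monomials of degree at most d and coefficients in [s]
  gives (M choose s) * s^s distinct members of the class, because Moebius
  coefficients are unique. On the other hand every member takes values in
  {0,...,s^2}, so q queries produce at most (s^2+1)^q different transcripts.
  Hence (M/s)^s * s^s \<le> (M choose s) * s^s \<le> s^(3q), i.e. s ln M \<le> 3 q ln s,
  and ln M \<ge> d ln (n/d).\<close>

lemma poly_of_eq_coeff_plus_proper_subsets:
  assumes "K \<subseteq> {..<n}"
  shows "poly_of n F K = F K + (\<Sum>J\<in>Pow K - {K}. F J)"
proof -
  have "finite (Pow K)"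
    using assms finite_subset by blast
  then show ?thesis
    using assms by (simp add: poly_of_def sum.remove[of "Pow K" K])
qed

lemma poly_of_inject:
  assumes F: "\<And>K. F K \<noteq> 0 \<Longrightarrow> K \<subseteq> {..<n}"
      and G: "\<And>K. G K \<noteq> 0 \<Longrightarrow> K \<subseteq> {..<n}"
      and eq: "poly_of n F = poly_of n G"
  shows "F = G"
proof
  fix K
  show "F K = G K"
  proof (cases "K \<subseteq> {..<n}")
    case False
    then show ?thesis using F G by metis
  next
    case True
    then have "finite K"
      using finite_subset by blast
    then show ?thesis
      using True
    proof (induction K rule: finite_psubset_induct)
      case (psubset K)
      have "(\<Sum>J\<in>Pow K - {K}. F J) = (\<Sum>J\<in>Pow K - {K}. G J)"
        using psubset by (intro sum.cong) auto
      then show ?case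
        using fun_cong[OF eq, of K] psubset.prems
        by (simp add: poly_of_eq_coeff_plus_proper_subsets)
    qed
  qed
qed

lemma inj_on_poly_of: "inj_on (poly_of n) {F. \<forall>K. F K \<noteq> 0 \<longrightarrow> K \<subseteq> {..<n}}"
  by (rule inj_onI, rule poly_of_inject) auto

lemma sum_in_Nats: "(\<And>x. x \<in> A \<Longrightarrow> f x \<in> \<nat>) \<Longrightarrow> sum f A \<in> (\<nat> :: 'a :: semiring_1 set)"
  by (induction A rule: infinite_finite_induct) auto

lemma poly_of_good_coeffs_range:
  assumes "good_coeffs n s d F"
  shows "poly_of n F x \<in> real ` {0..s * s}"
proof (cases "x \<subseteq> {..<n}")
  case False
  then show ?thesis by (force simp: poly_of_def)
next
  case True
  define supp where "supp = {K. F K \<noteq> 0}"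
  have supp: "supp \<subseteq> Pow {..<n}" "card supp \<le> s"
    and coeff: "\<And>K. K \<in> supp \<Longrightarrow> F K \<in> \<nat> \<and> F K \<le> real s"
    using assms by (force simp: good_coeffs_def supp_def)+
  have "finite (Pow x)"
    using True finite_subset by blast
  then have reduce: "poly_of n F x = (\<Sum>K\<in>Pow x \<inter> supp. F K)"
    using True by (auto simp: poly_of_def supp_def intro: sum.mono_neutral_right)
  have "(\<Sum>K\<in>Pow x \<inter> supp. F K) \<in> \<nat>"
    using coeff by (intro sum_in_Nats) auto
  then obtain m where m: "poly_of n F x = real m"
    using reduce Nats_cases by metis
  have "card (Pow x \<inter> supp) \<le> s"
    using supp card_mono[of supp "Pow x \<inter> supp"] finite_subset[OF supp(1)] by auto
  have "real m = (\<Sum>K\<in>Pow x \<inter> supp. F K)"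
    using m reduce by simp
  also have "\<dots> \<le> real (card (Pow x \<inter> supp)) * real s"
    using coeff by (intro sum_bounded_above) auto
  also have "\<dots> \<le> real s * real s"
    using \<open>card (Pow x \<inter> supp) \<le> s\<close> by (intro mult_right_mono) auto
  finally have "real m \<le> real s * real s" .
  then have "m \<le> s * s"
    by (simp flip: of_nat_mult)
  then show ?thesis
    using m by auto
qed

lemma length_transcript [simp]: "length (transcript Q f q) = q"
  by (induction q) (simp_all add: Let_def)

lemma set_transcript_subset:
  assumes "\<And>x. f x \<in> V"
  shows "set (transcript Q f q) \<subseteq> V"
  by (induction q) (auto simp: Let_def assms)

lemma recovers_card_le:
  assumes "recovers Q q C" and "finite V" and "\<And>f x. f \<in> C \<Longrightarrow> f x \<in> V"
  shows "finite C \<and> card C \<le> card V ^ q"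
proof -
  define L where "L = {xs. set xs \<subseteq> V \<and> length xs = q}"
  have "finite L" "card L = card V ^ q"
    using assms(2) by (simp_all add: L_def finite_lists_length_eq card_lists_length_eq)
  moreover have "set (transcript Q f q) \<subseteq> V" if "f \<in> C" for f
    using assms(3)[OF that] by (rule set_transcript_subset)
  then have "(\<lambda>f. transcript Q f q) ` C \<subseteq> L"
    by (auto simp: L_def)
  ultimately show ?thesis
    using assms(1) unfolding recovers_def
    by (metis card_image card_mono finite_imageD finite_subset)
qed

lemma card_subsets_card_le:
  assumes "finite A"
  shows "card {K. K \<subseteq> A \<and> card K \<le> d} = (\<Sum>i\<le>d. card A choose i)"
proof -
  have "{K. K \<subseteq> A \<and> card K \<le> d} = (\<Union>i\<le>d. {K. K \<subseteq> A \<and> card K = i})"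
    by auto
  moreover have "card (\<Union>i\<le>d. {K. K \<subseteq> A \<and> card K = i})
      = (\<Sum>i\<le>d. card {K. K \<subseteq> A \<and> card K = i})"
    using assms by (intro card_UN_disjoint) (auto intro: finite_subset)
  ultimately show ?thesis
    using n_subsets[OF assms] by simp
qed

lemma card_good_coeffs_ge:
  assumes "finite (Collect (good_coeffs n s d))"
  shows "(card {K. K \<subseteq> {..<n} \<and> card K \<le> d} choose s) * s ^ s
           \<le> card (Collect (good_coeffs n s d))"
proof -
  define S where "S = {K. K \<subseteq> {..<n} \<and> card K \<le> d}"
  define P where "P = (SIGMA A:{A. A \<subseteq> S \<and> card A = s}. A \<rightarrow>\<^sub>E {1..s})"
  define coeffs :: "nat set set \<times> (nat set \<Rightarrow> nat) \<Rightarrow> nat set \<Rightarrow> real"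
    where "coeffs = (\<lambda>(A, v) K. if K \<in> A then real (v K) else 0)"
  have "finite S"
    by (rule finite_subset[of _ "Pow {..<n}"]) (auto simp: S_def)
  have "card P = (\<Sum>A | A \<subseteq> S \<and> card A = s. card (A \<rightarrow>\<^sub>E {1..s}))"
    unfolding P_def using \<open>finite S\<close>
    by (intro card_SigmaI) (auto intro: finite_PiE rev_finite_subset)
  also have "\<dots> = (card S choose s) * s ^ s"
    using n_subsets[OF \<open>finite S\<close>, of s] \<open>finite S\<close>
    by (simp add: card_PiE rev_finite_subset)
  finally have card_P: "card P = (card S choose s) * s ^ s" .
  have support: "{K. coeffs (A, v) K \<noteq> 0} = A" if "(A, v) \<in> P" for A v
    using that by (force simp: P_def coeffs_def PiE_def Pi_def)
  have "coeffs ` P \<subseteq> Collect (good_coeffs n s d)"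
  proof clarify
    fix A v assume "(A, v) \<in> P"
    then show "good_coeffs n s d (coeffs (A, v))"
      using support[of A v] by (auto simp: good_coeffs_def P_def S_def coeffs_def)
  qed
  moreover have "inj_on coeffs P"
  proof (rule inj_onI, clarify)
    fix A v B w
    assume P: "(A, v) \<in> P" "(B, w) \<in> P" and eq: "coeffs (A, v) = coeffs (B, w)"
    then have "A = B"
      using support by metis
    moreover have "v K = w K" for K
      using fun_cong[OF eq, of K] P \<open>A = B\<close>
      by (cases "K \<in> A") (auto simp: coeffs_def P_def PiE_def extensional_def)
    ultimately show "A = B \<and> v = w"
      by auto
  qed
  ultimately show ?thesis
    using card_inj_on_le assms card_P by (fastforce simp: S_def)
qed

lemma ln_sum_choose_ge:
  assumes "1 \<le> d" "d \<le> n"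
  shows "real d * ln (real n / real d) \<le> ln (\<Sum>i\<le>d. n choose i)"
proof -
  have "(real n / real d) ^ d \<le> real (n choose d)"
    using binomial_ge_n_over_k_pow_k[OF assms(2)] by simp
  also have "\<dots> \<le> (\<Sum>i\<le>d. n choose i)"
    by (subst of_nat_le_iff, rule member_le_sum) auto
  finally have "ln ((real n / real d) ^ d) \<le> ln (\<Sum>i\<le>d. n choose i)"
    by (rule ln_mono) (use assms in auto)
  then show ?thesis
    using assms by (simp add: ln_realpow)
qed

lemma choose_pow_le_imp_ln_le:
  fixes M s q :: nat
  assumes "2 \<le> s" "s \<le> M" and count: "(M choose s) * s ^ s \<le> (s * s + 1) ^ q"
  shows "real s * ln M \<le> 3 * real q * ln s"
proof -
  have "s * s * 2 \<le> s * s * s" "1 \<le> s * s"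
    using assms(1) by (simp_all add: mult_le_mono2)
  then have "s * s + 1 \<le> s ^ 3"
    unfolding power3_eq_cube by linarith
  have "real M ^ s = (real M / real s) ^ s * real s ^ s"
    using assms by (simp add: power_divide)
  also have "\<dots> \<le> real (M choose s) * real s ^ s"
    using binomial_ge_n_over_k_pow_k[OF assms(2)] by (intro mult_right_mono) auto
  also have "\<dots> \<le> real ((s * s + 1) ^ q)"
    using count by (metis of_nat_le_iff of_nat_mult of_nat_power)
  also have "\<dots> \<le> real s ^ (3 * q)"
    using \<open>s * s + 1 \<le> s ^ 3\<close> by (simp add: power_mult power_mono flip: of_nat_power)
  finally have "ln (real M ^ s) \<le> ln (real s ^ (3 * q))"
    using assms by (subst ln_le_cancel_iff) auto
  then show ?thesis
    using assms by (simp add: ln_realpow)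
qed

lemma recovers_sparse_class_count:
  assumes "recovers Q q (sparse_class n s d)"
  shows "((\<Sum>i\<le>d. n choose i) choose s) * s ^ s \<le> (s * s + 1) ^ q"
proof -
  define G where "G = Collect (good_coeffs n s d)"
  have "sparse_class n s d = poly_of n ` G"
    by (auto simp: sparse_class_def G_def)
  moreover have "inj_on (poly_of n) G"
    by (rule inj_on_subset[OF inj_on_poly_of]) (unfold G_def good_coeffs_def, blast)
  moreover have "f x \<in> real ` {0..s * s}" if "f \<in> sparse_class n s d" for f x
    using that poly_of_good_coeffs_range by (auto simp: sparse_class_def)
  then have "finite (sparse_class n s d) \<and> card (sparse_class n s d) \<le> card (real ` {0..s * s}) ^ q"
    by (intro recovers_card_le[OF assms]) auto
  moreover have "card (real ` {0..s * s}) = s * s + 1"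
    by (simp add: card_image)
  ultimately have "finite G" "card G \<le> (s * s + 1) ^ q"
    by (auto simp: card_image dest: finite_imageD)
  then show ?thesis
    using card_good_coeffs_ge[of n s d] card_subsets_card_le[of "{..<n}" d] by (simp add: G_def)
qed

theorem theorem3:
  "\<exists>c>0. \<forall>n s d q Q.
      1 \<le> d \<longrightarrow> d \<le> n \<longrightarrow> 2 \<le> s \<longrightarrow> s \<le> (\<Sum>i\<le>d. n choose i) \<longrightarrow>
      recovers Q q (sparse_class n s d) \<longrightarrow>
      real q \<ge> c * (real s * real d * ln (real n / real d) / ln (real s))"
proof (intro exI[of _ "1/3"] conjI allI impI)
  fix n s d q :: nat and Q :: "real list \<Rightarrow> nat set"
  assume d: "1 \<le> d" "d \<le> n" and s: "2 \<le> s" "s \<le> (\<Sum>i\<le>d. n choose i)"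
    and rec: "recovers Q q (sparse_class n s d)"
  define M where "M = (\<Sum>i\<le>d. n choose i)"
  have "real d * ln (real n / real d) \<le> ln M"
    using ln_sum_choose_ge[OF d] unfolding M_def .
  then have "real s * (real d * ln (real n / real d)) \<le> real s * ln M"
    by (rule mult_left_mono) simp
  also have "\<dots> \<le> 3 * real q * ln s"
    using choose_pow_le_imp_ln_le[OF s(1)] s(2) recovers_sparse_class_count[OF rec]
    unfolding M_def by blast
  finally show "real q \<ge> 1/3 * (real s * real d * ln (real n / real d) / ln (real s))"
    using s by (simp add: field_simps)
qed simp

end
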